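(* (i) Let $B_1,\dots,B_n$ be subspaces of a finite-dimensional vector space $W$ over a finite field and let $\beta\subseteq\{1,\dots,n\}$. Then there exists a subspace $A$ of $W$ such that $H(T_A(B_j))=H(B_j\mid B_{\beta\setminus j})$ for all $j\in\beta$, $H(T_A(B_j):j\in\beta)=\sum_{j\in\beta}H(T_A(B_j))$, and $H(A)=H(B_\beta)-\sum_{j\in\beta}H(B_j\mid B_{\beta\setminus j})$. (ii) Let $\{B^i_1,\dots,B^i_n\}_{i=1}^\infty$ be a sequence of collections of subspaces (for each $i$, of a finite-dimensional vector space $W^i$ over a finite field), $\beta\subseteq\{1,\dots,n\}$, and $k(i)>0$ with $\lim_{i\to\infty}\frac{1}{k(i)}\big(H(B^i_\beta)-\sum_{j\in\beta}H(B^i_j\mid B^i_{\beta\setminus j})\big)=0$. Then there exist subspaces $A^i$ of $W^i$ such that for every $i$, $\sum_{j\in\beta}H(T_{A^i}(B^i_j))=H(T_{A^i}(B^i_j):j\in\beta)$, and for all $\alpha\subseteq\{1,\dots,n\}$, $\lim_{i\to\infty}\frac{1}{k(i)}H(T_{A^i}(B^i_j):j\in\alpha)=\lim_{i\to\infty}\frac{1}{k(i)}H(B^i_\alpha)$ (in the sense that if either limit exists then both exist and are equal).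
   Context: For subspaces, $\langle\cdots\rangle$ denotes the span. $B_\gamma$ denotes the collection $\{B_j:j\in\gamma\}$ and $B_{\beta\setminus j}=\{B_l:l\in\beta, l\ne j\}$. $H(B_\gamma)=H(B_j:j\in\gamma)=\dim\langle B_j:j\in\gamma\rangle$, $H(B)=\dim B$, and $H(\mathcal{S}\mid\mathcal{R})=\dim\langle\mathcal{S},\mathcal{R}\rangle-\dim\langle\mathcal{R}\rangle$. For a subspace $A$ of $W$, choose any $A^*$ with $\langle A,A^*\rangle=W$, $A\cap A^*=\{0\}$; for $u=u_1+u_2$ with $u_1\in A^*,u_2\in A$ set $T_A(u)=u_1$, and $T_A(B)=\{T_A(u):u\in B\}$. (The dimensions in the statement do not depend on the choice of $A^*$.) *)

theory Defs
  imports "HOL-Analysis.Analysis"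
begin

text \<open>Subspaces, spans and dimensions are the library notions module.subspace,
  module.span and vector_space.dim (dim S = dimension of the span of S).\<close>

definition fin_dim :: "('f::field \<Rightarrow> 'v::ab_group_add \<Rightarrow> 'v) \<Rightarrow> 'v set \<Rightarrow> bool" where
  "fin_dim sc W \<longleftrightarrow> (\<exists>S. finite S \<and> S \<subseteq> W \<and> module.span sc S = W)"

text \<open>H(B_gamma) = dim of the span of the B_j, j in gamma.\<close>
definition Hs :: "('f::field \<Rightarrow> 'v::ab_group_add \<Rightarrow> 'v) \<Rightarrow> (nat \<Rightarrow> 'v set) \<Rightarrow> nat set \<Rightarrow> nat" where
  "Hs sc B \<gamma> = vector_space.dim sc (\<Union>j\<in>\<gamma>. B j)"

definition Hcond :: "('f::field \<Rightarrow> 'v::ab_group_add \<Rightarrow> 'v) \<Rightarrow> 'v set \<Rightarrow> 'v set \<Rightarrow> nat" where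
  "Hcond sc S R = vector_space.dim sc (S \<union> R) - vector_space.dim sc R"

definition is_compl :: "('f::field \<Rightarrow> 'v::ab_group_add \<Rightarrow> 'v) \<Rightarrow> 'v set \<Rightarrow> 'v set \<Rightarrow> 'v set \<Rightarrow> bool" where
  "is_compl sc W A C \<longleftrightarrow> module.subspace sc C \<and> C \<subseteq> W \<and>
     module.span sc (A \<union> C) = W \<and> A \<inter> C = {0}"

text \<open>A chosen complement A* of A in W (the dimensions do not depend on the choice).\<close>
definition cmpl :: "('f::field \<Rightarrow> 'v::ab_group_add \<Rightarrow> 'v) \<Rightarrow> 'v set \<Rightarrow> 'v set \<Rightarrow> 'v set" where
  "cmpl sc W A = (SOME C. is_compl sc W A C)"

definition TA :: "('f::field \<Rightarrow> 'v::ab_group_add \<Rightarrow> 'v) \<Rightarrow> 'v set \<Rightarrow> 'v set \<Rightarrow> 'v \<Rightarrow> 'v" where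
  "TA sc W A u = (THE u1. u1 \<in> cmpl sc W A \<and> u - u1 \<in> A)"

end

theory Submission
  imports Defs
begin

text \<open>Take for A the span of the redundant parts \<open>B\<^sub>j \<inter> \<langle>B\<^sub>\<beta>\<^sub>\<setminus>\<^sub>j\<rangle>\<close>. Since A lies
  in every \<open>\<langle>B\<^sub>\<beta>\<^sub>\<setminus>\<^sub>j\<rangle>\<close>, it meets \<open>B\<^sub>j\<close> in exactly that part, so projecting along A,
  which lowers \<open>dim \<langle>S, A\<rangle>\<close> by exactly \<open>dim A\<close>, leaves \<open>H(B\<^sub>j | B\<^sub>\<beta>\<^sub>\<setminus>\<^sub>j)\<close> dimensions
  of \<open>B\<^sub>j\<close>. Modulo A the \<open>B\<^sub>j\<close> are independent, so their projections form a direct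
  sum, and counting dimensions in \<open>\<langle>A, B\<^sub>\<beta>\<rangle> = \<langle>B\<^sub>\<beta>\<rangle>\<close> gives \<open>dim A\<close>. For (ii),
  projecting along A lowers the rank of any family by at most \<open>dim A = o(k(i))\<close>.\<close>

lemma (in module) span_span_Un: "span (span X \<union> Y) = span (X \<union> Y)"
proof -
  have "span X \<subseteq> span (X \<union> Y)" by (rule span_mono) blast
  moreover have "X \<union> Y \<subseteq> span (span X \<union> Y)"
    using span_superset[of X] span_superset[of "span X \<union> Y"] by blast
  ultimately show ?thesis unfolding span_eq using span_superset[of "X \<union> Y"] by blast
qed

lemma (in vector_space) independent_extension_Diff_subset:
  assumes E: "independent E" "E \<subseteq> U \<union> V" and C: "C \<subseteq> E" "U \<subseteq> span C"
  shows "E - C \<subseteq> V"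
proof
  fix e assume e: "e \<in> E - C"
  show "e \<in> V"
  proof (rule ccontr)
    assume "e \<notin> V"
    then have "e \<in> span (E - {e})" using e E(2) C span_mono[of C "E - {e}"] by blast
    moreover have "E = insert e (E - {e})" using e by blast
    ultimately show False using E(1) independent_insert[of e "E - {e}"] by simp
  qed
qed

definition (in vector_space) redundancy_span :: "nat set \<Rightarrow> (nat \<Rightarrow> 'b set) \<Rightarrow> 'b set" where
  "redundancy_span \<beta> B = span (\<Union>j\<in>\<beta>. B j \<inter> span (\<Union>l\<in>\<beta>-{j}. B l))"

lemma (in vector_space) redundancy_span_subset_span_others:
  assumes "j \<in> \<beta>" shows "redundancy_span \<beta> B \<subseteq> span (\<Union>l\<in>\<beta>-{j}. B l)"
proof -
  have "B l \<subseteq> span (\<Union>m\<in>\<beta>-{j}. B m)" if "l \<in> \<beta> - {j}" for l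
    using that span_superset[of "\<Union>m\<in>\<beta>-{j}. B m"] by blast
  then have "(\<Union>l\<in>\<beta>. B l \<inter> span (\<Union>m\<in>\<beta>-{l}. B m)) \<subseteq> span (\<Union>m\<in>\<beta>-{j}. B m)"
    using assms by blast
  then show ?thesis unfolding redundancy_span_def by (rule span_minimal) simp
qed

lemma (in vector_space) Int_redundancy_span:
  assumes "j \<in> \<beta>" shows "B j \<inter> redundancy_span \<beta> B = B j \<inter> span (\<Union>l\<in>\<beta>-{j}. B l)"
proof -
  have "B j \<inter> span (\<Union>l\<in>\<beta>-{j}. B l) \<subseteq> redundancy_span \<beta> B"
    using assms span_superset[of "\<Union>j\<in>\<beta>. B j \<inter> span (\<Union>l\<in>\<beta>-{j}. B l)"]
    unfolding redundancy_span_def by blast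
  then show ?thesis using redundancy_span_subset_span_others[OF assms] by blast
qed

lemma (in vector_space) redundancy_span_subset_span_UN:
  "redundancy_span \<beta> B \<subseteq> span (\<Union>j\<in>\<beta>. B j)"
  unfolding redundancy_span_def by (rule span_mono) blast

locale fin_dim_subspace = vector_space +
  fixes W
  assumes subspace_W: "subspace W" and fin_dim_W: "fin_dim scale W"
begin

lemma independent_subset_finite: assumes "independent B" "B \<subseteq> W" shows "finite B"
proof -
  obtain S where S: "finite S" "S \<subseteq> W" "span S = W"
    using fin_dim_W unfolding fin_dim_def by blast
  show ?thesis using independent_span_bound[OF S(1) assms(1)] assms(2) S(3) by auto
qed

lemma dim_mono: assumes "V \<subseteq> span U" "U \<subseteq> W" shows "dim V \<le> dim U"
proof -
  obtain B where B: "B \<subseteq> U" "independent B" "U \<subseteq> span B" "card B = dim U"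
    using basis_exists by blast
  have "finite B" using independent_subset_finite B assms by blast
  have "V \<subseteq> span B" using assms(1) B(3) by (metis span_mono span_span order_trans)
  then show ?thesis using dim_le_card[OF _ \<open>finite B\<close>] B(4) by simp
qed

lemma dim_eq_0_iff: assumes "V \<subseteq> W" shows "dim V = 0 \<longleftrightarrow> V \<subseteq> {0}"
proof
  assume "V \<subseteq> {0}"
  then show "dim V = 0" using dim_le_card[of V "{}"] by simp
next
  assume dim0: "dim V = 0"
  show "V \<subseteq> {0}"
  proof
    fix x assume x: "x \<in> V"
    show "x \<in> {0}"
    proof (rule ccontr)
      assume "x \<notin> {0}"
      then have "dim {x} = 1"
        using dim_eq_card_independent independent_insert[of x "{}"] by fastforce
      moreover have "dim {x} \<le> dim V" using dim_mono[of "{x}" V] x assms span_superset by blast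
      ultimately show False using dim0 by simp
    qed
  qed
qed

lemma dim_Un_add_dim_Int:
  assumes U: "subspace U" "U \<subseteq> W" and V: "subspace V" "V \<subseteq> W"
  shows "dim (U \<union> V) + dim (U \<inter> V) = dim U + dim V"
proof -
  obtain B where B: "B \<subseteq> U \<inter> V" "independent B" "U \<inter> V \<subseteq> span B" "card B = dim (U \<inter> V)"
    using basis_exists by blast
  obtain C where C: "B \<subseteq> C" "C \<subseteq> U" "independent C" "U \<subseteq> span C"
    using maximal_independent_subset_extend[of B U] B by blast
  obtain E where E: "C \<subseteq> E" "E \<subseteq> U \<union> V" "independent E" "U \<union> V \<subseteq> span E"
    using maximal_independent_subset_extend[of C "U \<union> V"] C by blast
  define F where "F = E - C"
  have "finite E" using independent_subset_finite E U V by blast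
  then have fin: "finite E" "finite F" "finite B" "finite C"
    using C(1) E(1) unfolding F_def by (auto intro: finite_subset)
  have FV: "F \<subseteq> V"
    unfolding F_def by (rule independent_extension_Diff_subset[OF E(3) E(2) E(1) C(4)])
  \<comment> \<open>\<open>B \<union> F\<close> is a basis of V: the C-component of any vector of V lies in \<open>U \<inter> V\<close>.\<close>
  have "V \<subseteq> span (B \<union> F)"
  proof
    fix v assume v: "v \<in> V"
    have "span E = span (C \<union> F)" using E(1) F_def by (simp add: Un_absorb1 Un_Diff_cancel)
    then have "v \<in> span (C \<union> F)" using E(4) v by blast
    then obtain c f where cf: "v = c + f" "c \<in> span C" "f \<in> span F" using span_Un by blast
    have "f \<in> V" using cf(3) span_minimal[OF FV V(1)] by blast
    then have "c \<in> V" using cf(1) v subspace_diff[OF V(1), of v f] by simp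
    moreover have "c \<in> U" using cf(2) span_minimal[OF C(2) U(1)] by blast
    ultimately have "c \<in> span (B \<union> F)" using B(3) span_mono[of B "B \<union> F"] by blast
    moreover have "f \<in> span (B \<union> F)" using cf(3) span_mono[of F "B \<union> F"] by blast
    ultimately show "v \<in> span (B \<union> F)" using cf(1) span_add by blast
  qed
  moreover have "independent (B \<union> F)"
    using independent_mono[OF E(3)] C(1) E(1) F_def by blast
  ultimately have "dim V = card (B \<union> F)"
    using basis_card_eq_dim[of "B \<union> F" V] B(1) FV by simp
  also have "\<dots> = card B + card F" using fin C(1) F_def by (intro card_Un_disjoint) auto
  finally have dV: "dim V = card B + card F" .
  have "card E = card C + card F"
    using fin F_def E(1) card_Un_disjoint[of C F] by (simp add: Un_absorb1 Un_Diff_cancel)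
  moreover have "dim U = card C" using basis_card_eq_dim[OF C(2) C(4) C(3)] by simp
  moreover have "dim (U \<union> V) = card E" using basis_card_eq_dim[OF E(2) E(4) E(3)] by simp
  ultimately show ?thesis using dV B(4) by simp
qed

lemma dim_Un_le: assumes "X \<subseteq> W" "Y \<subseteq> W" shows "dim (X \<union> Y) \<le> dim X + dim Y"
proof -
  have "span X \<subseteq> W" "span Y \<subseteq> W" using span_minimal[OF _ subspace_W] assms by auto
  then have "dim (span X \<union> span Y) + dim (span X \<inter> span Y) = dim X + dim Y"
    using dim_Un_add_dim_Int by simp
  moreover have "span (span X \<union> span Y) = span (X \<union> Y)"
    using span_span_Un[of X "span Y"] span_span_Un[of Y X] by (simp add: sup_commute)
  ultimately show ?thesis by (metis dim_span le_add1)
qed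

lemma exists_compl: assumes A: "subspace A" "A \<subseteq> W" shows "\<exists>C. is_compl scale W A C"
proof -
  obtain BA where BA: "BA \<subseteq> A" "independent BA" "A \<subseteq> span BA" "card BA = dim A"
    using basis_exists by blast
  obtain E where E: "BA \<subseteq> E" "E \<subseteq> W" "independent E" "W \<subseteq> span E"
    using maximal_independent_subset_extend[of BA W] BA A by blast
  define C where "C = span (E - BA)"
  have C: "subspace C" "C \<subseteq> W"
    unfolding C_def using span_minimal[OF _ subspace_W, of "E - BA"] E by auto
  have span_AC: "span (A \<union> C) = W"
  proof
    show "span (A \<union> C) \<subseteq> W" using span_minimal[OF _ subspace_W] A C by blast
    have "E \<subseteq> A \<union> C" using BA(1) span_superset[of "E - BA"] unfolding C_def by blast
    then show "W \<subseteq> span (A \<union> C)" using E(4) span_mono by blast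
  qed
  have "finite E" using independent_subset_finite E by blast
  then have "card E = card BA + card (E - BA)"
    using E(1) card_Diff_subset[of BA E] card_mono[of E BA] finite_subset[of BA E] by simp
  moreover have "dim (A \<union> C) = card E"
    using span_AC basis_card_eq_dim[OF E(2) E(4) E(3)] by (metis dim_span)
  moreover have "dim C = card (E - BA)"
    unfolding C_def dim_span using dim_eq_card_independent independent_mono[OF E(3)] by blast
  ultimately have "dim (A \<inter> C) = 0" using dim_Un_add_dim_Int[OF A C] BA(4) by simp
  then have "A \<inter> C = {0}"
    using dim_eq_0_iff[of "A \<inter> C"] A(2) subspace_0[OF A(1)] subspace_0[OF C(1)] by blast
  then show ?thesis unfolding is_compl_def using C span_AC by blast
qed

lemma is_compl_cmpl: assumes "subspace A" "A \<subseteq> W" shows "is_compl scale W A (cmpl scale W A)"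
  unfolding cmpl_def using exists_compl[OF assms] by (rule someI_ex)

lemma TA_decomposition: assumes A: "subspace A" "A \<subseteq> W" and u: "u \<in> W"
  shows "TA scale W A u \<in> cmpl scale W A" "u - TA scale W A u \<in> A"
proof -
  define C where "C = cmpl scale W A"
  have C: "subspace C" "span (A \<union> C) = W" "A \<inter> C = {0}"
    using is_compl_cmpl[OF A] unfolding is_compl_def C_def by auto
  have "u \<in> span (A \<union> C)" using u C(2) by simp
  then obtain a c where ac: "u = a + c" "a \<in> span A" "c \<in> span C"
    unfolding span_Un by blast
  have c: "c \<in> C \<and> u - c \<in> A"
    using ac span_minimal[OF order_refl A(1)] span_minimal[OF order_refl C(1)] by auto
  have unique: "x = c" if "x \<in> C \<and> u - x \<in> A" for x
  proof -
    have "(u - x) - (u - c) \<in> A" using that c subspace_diff[OF A(1)] by blast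
    then have "c - x \<in> A" by (simp add: algebra_simps)
    moreover have "c - x \<in> C" using that c subspace_diff[OF C(1)] by blast
    ultimately have "c - x = 0" using C(3) by blast
    then show "x = c" by simp
  qed
  have "TA scale W A u = c"
    unfolding TA_def C_def[symmetric] by (rule the_equality) (rule c, erule unique)
  then show "TA scale W A u \<in> cmpl scale W A" "u - TA scale W A u \<in> A"
    using c unfolding C_def by auto
qed

text \<open>The image \<open>T\<^sub>A(S)\<close> spans a subspace of the complement that together with A
  spans \<open>\<langle>S, A\<rangle>\<close>.\<close>
lemma dim_TA_image_add_dim: assumes A: "subspace A" "A \<subseteq> W" and S: "S \<subseteq> W"
  shows "dim (TA scale W A ` S) + dim A = dim (S \<union> A)"
proof -
  define P where "P = TA scale W A"
  define C where "C = cmpl scale W A"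
  have C: "subspace C" "C \<subseteq> W" "A \<inter> C = {0}"
    using is_compl_cmpl[OF A] unfolding is_compl_def C_def by auto
  have P: "P s \<in> C" "s - P s \<in> A" if "s \<in> S" for s
    using TA_decomposition[OF A] S that unfolding P_def C_def by auto
  define U where "U = span (P ` S)"
  have U: "subspace U" "U \<subseteq> C"
    unfolding U_def using span_minimal[OF _ C(1), of "P ` S"] P by auto
  have "U \<inter> A \<subseteq> {0}" using U(2) C(3) by blast
  then have "dim (U \<inter> A) = 0" using dim_eq_0_iff[of "U \<inter> A"] U(2) C(2) by blast
  then have "dim (U \<union> A) = dim U + dim A"
    using dim_Un_add_dim_Int[OF U(1) _ A] U(2) C(2) by simp
  moreover have "span (U \<union> A) = span (S \<union> A)"
    unfolding span_eq
  proof
    have "P s \<in> span (S \<union> A)" if "s \<in> S" for s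
    proof -
      have "s \<in> span (S \<union> A)" "s - P s \<in> span (S \<union> A)"
        using that P(2) span_superset by blast+
      then have "s - (s - P s) \<in> span (S \<union> A)" by (rule span_diff)
      then show ?thesis by simp
    qed
    then have "U \<subseteq> span (S \<union> A)" unfolding U_def using span_minimal by blast
    then show "U \<union> A \<subseteq> span (S \<union> A)" using span_superset by blast
    have "s \<in> span (U \<union> A)" if "s \<in> S" for s
    proof -
      have "P s \<in> span (U \<union> A)" "s - P s \<in> span (U \<union> A)"
        using that P span_superset[of "P ` S"] span_superset[of "U \<union> A"] unfolding U_def by blast+
      then have "P s + (s - P s) \<in> span (U \<union> A)" by (rule span_add)
      then show ?thesis by simp
    qed
    then show "S \<union> A \<subseteq> span (U \<union> A)" using span_superset by blast
  qed
  then have "dim (U \<union> A) = dim (S \<union> A)" by (rule span_eq_dim)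
  ultimately show ?thesis unfolding U_def P_def by simp
qed

lemma abs_dim_TA_image_diff_le:
  assumes A: "subspace A" "A \<subseteq> W" and S: "S \<subseteq> W"
  shows "\<bar>real (dim (TA scale W A ` S)) - real (dim S)\<bar> \<le> real (dim A)"
proof -
  have "dim S \<le> dim (S \<union> A)" using dim_mono[of S "S \<union> A"] span_superset[of "S \<union> A"] S A by blast
  moreover have "dim (S \<union> A) \<le> dim S + dim A" using dim_Un_le S A by blast
  ultimately show ?thesis using dim_TA_image_add_dim[OF A S] by linarith
qed

lemma dim_TA_image_subspace:
  assumes A: "subspace A" "A \<subseteq> W" and S: "subspace S" "S \<subseteq> W"
  shows "dim (TA scale W A ` S) + dim (S \<inter> A) = dim S"
  using dim_TA_image_add_dim[OF A S(2)] dim_Un_add_dim_Int[OF S A] by simp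

lemma Hcond_add_dim_Int_span:
  assumes S: "subspace S" "S \<subseteq> W" and R: "R \<subseteq> W"
  shows "Hcond scale S R + dim (S \<inter> span R) = dim S"
proof -
  have spanR: "subspace (span R)" "span R \<subseteq> W" using span_minimal[OF R subspace_W] by auto
  have "dim (S \<inter> span R) \<le> dim S" using dim_mono[of "S \<inter> span R" S] S span_superset[of S] by blast
  moreover have "dim (S \<union> R) = dim (S \<union> span R)"
    using span_span_Un[of R S] by (metis dim_span sup_commute)
  ultimately show ?thesis
    using dim_Un_add_dim_Int[OF S spanR] unfolding Hcond_def by simp
qed

lemma dim_Un_UNION_independent_over:
  assumes "finite \<beta>" and A: "subspace A" "A \<subseteq> W"
    and "\<And>j. j \<in> \<beta> \<Longrightarrow> subspace (B j)" "\<And>j. j \<in> \<beta> \<Longrightarrow> B j \<subseteq> W"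
    and "\<And>j. j \<in> \<beta> \<Longrightarrow> B j \<inter> span (A \<union> (\<Union>l\<in>\<beta>-{j}. B l)) \<subseteq> A"
  shows "dim (A \<union> (\<Union>j\<in>\<beta>. B j)) = dim A + (\<Sum>j\<in>\<beta>. dim (TA scale W A ` B j))"
  using assms(1,4-6)
proof (induction \<beta> rule: finite_induct)
  case empty
  then show ?case by simp
next
  case (insert j \<beta>)
  have "B l \<inter> span (A \<union> (\<Union>m\<in>\<beta>-{l}. B m)) \<subseteq> A" if "l \<in> \<beta>" for l
    using insert.prems(3)[of l] that
      span_mono[of "A \<union> (\<Union>m\<in>\<beta>-{l}. B m)" "A \<union> (\<Union>m\<in>insert j \<beta>-{l}. B m)"] by blast
  then have IH: "dim (A \<union> (\<Union>l\<in>\<beta>. B l)) = dim A + (\<Sum>l\<in>\<beta>. dim (TA scale W A ` B l))"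
    using insert.prems(1,2) by (intro insert.IH) auto
  define U where "U = span (A \<union> (\<Union>l\<in>\<beta>. B l))"
  have "A \<union> (\<Union>l\<in>\<beta>. B l) \<subseteq> W" using A insert.prems(2) by blast
  then have U: "subspace U" "U \<subseteq> W" unfolding U_def using span_minimal[OF _ subspace_W] by auto
  have Bj: "subspace (B j)" "B j \<subseteq> W" using insert.prems by auto
  have "insert j \<beta> - {j} = \<beta>" using insert.hyps by blast
  then have "B j \<inter> U \<subseteq> A" using insert.prems(3)[of j] unfolding U_def by simp
  moreover have "A \<subseteq> U" unfolding U_def using span_superset by blast
  ultimately have "U \<inter> B j = B j \<inter> A" by blast
  then have modular: "dim (U \<union> B j) + dim (B j \<inter> A) = dim U + dim (B j)"
    using dim_Un_add_dim_Int[OF U Bj] by (simp only:)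
  have "span (A \<union> (\<Union>l\<in>insert j \<beta>. B l)) = span (U \<union> B j)"
    unfolding U_def span_span_Un by (rule arg_cong[where f = span]) blast
  then have "dim (A \<union> (\<Union>l\<in>insert j \<beta>. B l)) = dim (U \<union> B j)" by (rule span_eq_dim)
  also have "\<dots> = dim U + dim (TA scale W A ` B j)"
    using modular by (simp add: dim_TA_image_subspace[OF A Bj, symmetric])
  also have "\<dots> = dim A + (\<Sum>l\<in>\<beta>. dim (TA scale W A ` B l)) + dim (TA scale W A ` B j)"
    unfolding U_def using IH by simp
  also have "\<dots> = dim A + (\<Sum>l\<in>insert j \<beta>. dim (TA scale W A ` B l))"
    by (simp add: sum.insert[OF insert.hyps])
  finally show ?case .
qed

lemma exists_TA_direct_sum:
  assumes "finite \<beta>" and B: "\<And>j. j \<in> \<beta> \<Longrightarrow> subspace (B j)" "\<And>j. j \<in> \<beta> \<Longrightarrow> B j \<subseteq> W"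
  obtains A where "subspace A" "A \<subseteq> W"
    "\<And>j. j \<in> \<beta> \<Longrightarrow> dim (TA scale W A ` B j) = Hcond scale (B j) (\<Union>l\<in>\<beta>-{j}. B l)"
    "Hs scale (\<lambda>j. TA scale W A ` B j) \<beta> = (\<Sum>j\<in>\<beta>. dim (TA scale W A ` B j))"
    "Hs scale B \<beta> = dim A + (\<Sum>j\<in>\<beta>. Hcond scale (B j) (\<Union>l\<in>\<beta>-{j}. B l))"
proof -
  define A where "A = redundancy_span \<beta> B"
  define P where "P = TA scale W A"
  have B_W: "(\<Union>j\<in>\<beta>. B j) \<subseteq> W" using B(2) by blast
  have "subspace A" unfolding A_def redundancy_span_def by simp
  moreover have "A \<subseteq> W"
    unfolding A_def using redundancy_span_subset_span_UN[of \<beta> B] span_minimal[OF B_W subspace_W] by blast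
  ultimately have A: "subspace A" "A \<subseteq> W" by blast+
  have dim_P: "dim (P ` B j) = Hcond scale (B j) (\<Union>l\<in>\<beta>-{j}. B l)" if "j \<in> \<beta>" for j
  proof -
    have others_W: "(\<Union>l\<in>\<beta>-{j}. B l) \<subseteq> W" using B_W by blast
    show ?thesis
      using dim_TA_image_subspace[OF A B(1,2)[OF that]]
        Hcond_add_dim_Int_span[OF B(1,2)[OF that] others_W]
        Int_redundancy_span[OF that, of B] unfolding P_def A_def by simp
  qed
  \<comment> \<open>Modulo A the \<open>B\<^sub>j\<close> are independent, since A lies in \<open>\<langle>B\<^sub>\<beta>\<^sub>\<setminus>\<^sub>j\<rangle>\<close>.\<close>
  have independent_over_A: "B j \<inter> span (A \<union> (\<Union>l\<in>\<beta>-{j}. B l)) \<subseteq> A" if "j \<in> \<beta>" for j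
  proof -
    have "A \<union> (\<Union>l\<in>\<beta>-{j}. B l) \<subseteq> span (\<Union>l\<in>\<beta>-{j}. B l)"
      using redundancy_span_subset_span_others[OF that, of B] span_superset[of "\<Union>l\<in>\<beta>-{j}. B l"]
      unfolding A_def by blast
    then have "span (A \<union> (\<Union>l\<in>\<beta>-{j}. B l)) \<subseteq> span (\<Union>l\<in>\<beta>-{j}. B l)"
      by (rule span_minimal) simp
    then show ?thesis using Int_redundancy_span[OF that, of B] unfolding A_def by blast
  qed
  have "span (A \<union> (\<Union>j\<in>\<beta>. B j)) = span (\<Union>j\<in>\<beta>. B j)"
    unfolding span_eq A_def using redundancy_span_subset_span_UN[of \<beta> B]
      span_superset[of "\<Union>j\<in>\<beta>. B j"] span_superset[of "redundancy_span \<beta> B \<union> (\<Union>j\<in>\<beta>. B j)"]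
    by blast
  then have dim_A_B: "dim (A \<union> (\<Union>j\<in>\<beta>. B j)) = Hs scale B \<beta>"
    unfolding Hs_def by (rule span_eq_dim)
  then have Hs_B: "Hs scale B \<beta> = dim A + (\<Sum>j\<in>\<beta>. dim (P ` B j))"
    using dim_Un_UNION_independent_over[where B = B, OF \<open>finite \<beta>\<close> A B independent_over_A]
    unfolding P_def by simp
  have "dim (P ` (\<Union>j\<in>\<beta>. B j)) + dim A = Hs scale B \<beta>"
    using dim_TA_image_add_dim[OF A B_W] dim_A_B unfolding P_def by (simp add: sup_commute)
  then have "Hs scale (\<lambda>j. P ` B j) \<beta> = (\<Sum>j\<in>\<beta>. dim (P ` B j))"
    using Hs_B unfolding Hs_def by (simp add: image_UN)
  then show ?thesis
    using that[OF A] dim_P Hs_B sum.cong[OF refl dim_P] unfolding P_def by simp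
qed

end

lemma (in vector_space) fin_dim_subspaceI:
  "subspace W \<Longrightarrow> fin_dim scale W \<Longrightarrow> fin_dim_subspace scale W"
  by (simp add: fin_dim_subspace_def fin_dim_subspace_axioms_def vector_space_axioms)

lemma LIMSEQ_iff_of_abs_diff_le:
  fixes f g d :: "nat \<Rightarrow> real"
  assumes "\<And>i. \<bar>f i - g i\<bar> \<le> d i" and "d \<longlonglongrightarrow> 0"
  shows "f \<longlonglongrightarrow> L \<longleftrightarrow> g \<longlonglongrightarrow> L"
proof (rule Lim_transform_eq)
  show "(\<lambda>i. f i - g i) \<longlonglongrightarrow> 0"
    by (rule Lim_null_comparison[OF always_eventually assms(2)]) (simp add: assms(1))
qed

lemma (in vector_space) exists_TA_sequence_asymptotically_rank_preserving:
  fixes k :: "nat \<Rightarrow> real"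
  assumes W: "\<And>i. subspace (W i)" "\<And>i. fin_dim scale (W i)"
    and B: "\<And>i j. j \<in> N \<Longrightarrow> subspace (B i j)" "\<And>i j. j \<in> N \<Longrightarrow> B i j \<subseteq> W i"
    and "finite \<beta>" "\<beta> \<subseteq> N" and k: "\<And>i. k i > 0"
    and lim: "(\<lambda>i. (real (Hs scale (B i) \<beta>)
                - (\<Sum>j\<in>\<beta>. real (Hcond scale (B i j) (\<Union>l\<in>\<beta>-{j}. B i l)))) / k i) \<longlonglongrightarrow> 0"
  obtains A where "\<And>i. subspace (A i)" "\<And>i. A i \<subseteq> W i"
    "\<And>i. (\<Sum>j\<in>\<beta>. dim (TA scale (W i) (A i) ` B i j)) = Hs scale (\<lambda>j. TA scale (W i) (A i) ` B i j) \<beta>"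
    "\<And>\<alpha> L. \<alpha> \<subseteq> N \<Longrightarrow>
       ((\<lambda>i. real (Hs scale (\<lambda>j. TA scale (W i) (A i) ` B i j) \<alpha>) / k i) \<longlonglongrightarrow> L)
       \<longleftrightarrow> ((\<lambda>i. real (Hs scale (B i) \<alpha>) / k i) \<longlonglongrightarrow> L)"
proof -
  have fin_dim_subspace_W: "fin_dim_subspace scale (W i)" for i using fin_dim_subspaceI W by blast
  have "\<forall>i. \<exists>A. subspace A \<and> A \<subseteq> W i \<and>
      (\<Sum>j\<in>\<beta>. dim (TA scale (W i) A ` B i j)) = Hs scale (\<lambda>j. TA scale (W i) A ` B i j) \<beta> \<and>
      Hs scale (B i) \<beta> = dim A + (\<Sum>j\<in>\<beta>. Hcond scale (B i j) (\<Union>l\<in>\<beta>-{j}. B i l))"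
    (is "\<forall>i. \<exists>A. ?P i A")
  proof
    fix i
    obtain A where "subspace A" "A \<subseteq> W i"
      "Hs scale (\<lambda>j. TA scale (W i) A ` B i j) \<beta> = (\<Sum>j\<in>\<beta>. dim (TA scale (W i) A ` B i j))"
      "Hs scale (B i) \<beta> = dim A + (\<Sum>j\<in>\<beta>. Hcond scale (B i j) (\<Union>l\<in>\<beta>-{j}. B i l))"
    proof (rule fin_dim_subspace.exists_TA_direct_sum[OF fin_dim_subspace_W[of i], of \<beta> "B i"])
      show "finite \<beta>" by fact
      show "subspace (B i j)" "B i j \<subseteq> W i" if "j \<in> \<beta>" for j
        using B(1)[of j i] B(2)[of j i] that \<open>\<beta> \<subseteq> N\<close> by auto
    qed
    then show "\<exists>A. ?P i A" by (intro exI[of _ A]) simp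
  qed
  then obtain A where "\<forall>i. ?P i (A i)" by (rule choice[THEN exE])
  then have A: "?P i (A i)" for i by (rule spec)
  have rank_limits: "((\<lambda>i. real (Hs scale (\<lambda>j. TA scale (W i) (A i) ` B i j) \<alpha>) / k i) \<longlonglongrightarrow> L)
       \<longleftrightarrow> ((\<lambda>i. real (Hs scale (B i) \<alpha>) / k i) \<longlonglongrightarrow> L)" if "\<alpha> \<subseteq> N" for \<alpha> L
  proof (rule LIMSEQ_iff_of_abs_diff_le[OF _ lim])
    fix i
    define X where "X = (\<Union>j\<in>\<alpha>. B i j)"
    define T where "T = TA scale (W i) (A i)"
    have "X \<subseteq> W i" unfolding X_def using B(2) that by blast
    then have "\<bar>real (dim (T ` X)) - real (dim X)\<bar> \<le> real (dim (A i))"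
      using fin_dim_subspace.abs_dim_TA_image_diff_le[OF fin_dim_subspace_W[of i]] A[of i] unfolding T_def by blast
    also have "real (dim (A i)) = real (Hs scale (B i) \<beta>)
                - (\<Sum>j\<in>\<beta>. real (Hcond scale (B i j) (\<Union>l\<in>\<beta>-{j}. B i l)))"
      using A[of i] by simp
    finally have "\<bar>real (dim (T ` X)) - real (dim X)\<bar> / k i \<le> \<dots> / k i"
      using k[of i] by (simp add: divide_right_mono)
    moreover have "Hs scale (\<lambda>j. T ` B i j) \<alpha> = dim (T ` X)" "Hs scale (B i) \<alpha> = dim X"
      unfolding Hs_def X_def by (simp_all add: image_UN)
    ultimately show "\<bar>real (Hs scale (\<lambda>j. TA scale (W i) (A i) ` B i j) \<alpha>) / k i
              - real (Hs scale (B i) \<alpha>) / k i\<bar>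
           \<le> (real (Hs scale (B i) \<beta>)
                - (\<Sum>j\<in>\<beta>. real (Hcond scale (B i j) (\<Union>l\<in>\<beta>-{j}. B i l)))) / k i"
      using k[of i] unfolding T_def by (simp add: diff_divide_distrib[symmetric])
  qed
  show ?thesis
  proof (rule that)
    show "subspace (A i)" "A i \<subseteq> W i"
      "(\<Sum>j\<in>\<beta>. dim (TA scale (W i) (A i) ` B i j)) = Hs scale (\<lambda>j. TA scale (W i) (A i) ` B i j) \<beta>"
      for i using A[of i] by auto
  qed (fact rank_limits)
qed

theorem lemma5:
  fixes sc :: "'f::{field,finite} \<Rightarrow> 'v::ab_group_add \<Rightarrow> 'v"
  assumes vs: "vector_space sc"
  shows
  "(\<forall>(W::'v set) (B::nat \<Rightarrow> 'v set) (n::nat) (\<beta>::nat set).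
      module.subspace sc W \<and> fin_dim sc W \<and>
      (\<forall>j\<in>{1..n}. module.subspace sc (B j) \<and> B j \<subseteq> W) \<and> \<beta> \<subseteq> {1..n} \<longrightarrow>
      (\<exists>A. module.subspace sc A \<and> A \<subseteq> W \<and>
         (\<forall>j\<in>\<beta>. vector_space.dim sc (TA sc W A ` B j)
                  = Hcond sc (B j) (\<Union>l\<in>\<beta>-{j}. B l)) \<and>
         Hs sc (\<lambda>j. TA sc W A ` B j) \<beta>
           = (\<Sum>j\<in>\<beta>. vector_space.dim sc (TA sc W A ` B j)) \<and>
         int (vector_space.dim sc A)
           = int (Hs sc B \<beta>) - (\<Sum>j\<in>\<beta>. int (Hcond sc (B j) (\<Union>l\<in>\<beta>-{j}. B l)))))
   \<and>
   (\<forall>(W::nat \<Rightarrow> 'v set) (B::nat \<Rightarrow> nat \<Rightarrow> 'v set) (n::nat) (\<beta>::nat set) (k::nat \<Rightarrow> real).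
      (\<forall>i. module.subspace sc (W i) \<and> fin_dim sc (W i) \<and>
           (\<forall>j\<in>{1..n}. module.subspace sc (B i j) \<and> B i j \<subseteq> W i) \<and> k i > 0) \<and>
      \<beta> \<subseteq> {1..n} \<and>
      (\<lambda>i. (real (Hs sc (B i) \<beta>)
             - (\<Sum>j\<in>\<beta>. real (Hcond sc (B i j) (\<Union>l\<in>\<beta>-{j}. B i l)))) / k i)
        \<longlonglongrightarrow> 0 \<longrightarrow>
      (\<exists>A::nat \<Rightarrow> 'v set.
         (\<forall>i. module.subspace sc (A i) \<and> A i \<subseteq> W i) \<and>
         (\<forall>i. (\<Sum>j\<in>\<beta>. vector_space.dim sc (TA sc (W i) (A i) ` B i j))
               = Hs sc (\<lambda>j. TA sc (W i) (A i) ` B i j) \<beta>) \<and>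
         (\<forall>\<alpha>. \<alpha> \<subseteq> {1..n} \<longrightarrow> (\<forall>L::real.
            ((\<lambda>i. real (Hs sc (\<lambda>j. TA sc (W i) (A i) ` B i j) \<alpha>) / k i) \<longlonglongrightarrow> L)
            \<longleftrightarrow> ((\<lambda>i. real (Hs sc (B i) \<alpha>) / k i) \<longlonglongrightarrow> L)))))"
proof -
  interpret vector_space sc by (rule vs)
  show ?thesis
  proof (intro conjI allI impI, goal_cases)
    case (1 W B n \<beta>)
    then interpret fin_dim_subspace sc W by (intro fin_dim_subspaceI) auto
    have "finite \<beta>" using 1 finite_subset by blast
    obtain A where "subspace A" "A \<subseteq> W"
      "\<And>j. j \<in> \<beta> \<Longrightarrow> dim (TA sc W A ` B j) = Hcond sc (B j) (\<Union>l\<in>\<beta>-{j}. B l)"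
      "Hs sc (\<lambda>j. TA sc W A ` B j) \<beta> = (\<Sum>j\<in>\<beta>. dim (TA sc W A ` B j))"
      "Hs sc B \<beta> = dim A + (\<Sum>j\<in>\<beta>. Hcond sc (B j) (\<Union>l\<in>\<beta>-{j}. B l))"
      using exists_TA_direct_sum[OF \<open>finite \<beta>\<close>, of B] 1 by blast
    then show ?case by (intro exI[of _ A]) simp
  next
    case (2 W B n \<beta> k)
    then have "finite \<beta>" using finite_subset by blast
    with 2 obtain A where "\<And>i. subspace (A i)" "\<And>i. A i \<subseteq> W i"
      "\<And>i. (\<Sum>j\<in>\<beta>. dim (TA sc (W i) (A i) ` B i j)) = Hs sc (\<lambda>j. TA sc (W i) (A i) ` B i j) \<beta>"
      "\<And>\<alpha> L. \<alpha> \<subseteq> {1..n} \<Longrightarrow>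
         ((\<lambda>i. real (Hs sc (\<lambda>j. TA sc (W i) (A i) ` B i j) \<alpha>) / k i) \<longlonglongrightarrow> L)
         \<longleftrightarrow> ((\<lambda>i. real (Hs sc (B i) \<alpha>) / k i) \<longlonglongrightarrow> L)"
      using exists_TA_sequence_asymptotically_rank_preserving[of W "{1..n}" B \<beta> k] by blast
    then show ?case by (intro exI[of _ A]) auto
  qed
qed

end
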